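(* Let $Q\in\mathbb{C}[x,y,z]$ be a homogeneous polynomial of degree $4$ that is $G_8$-invariant, i.e. $Q(\pm x,\pm y,\pm z)=Q(x,y,z)$ for all choices of signs, and suppose that the plane quartic $C: Q=0$ in $\mathbb{P}^2_{\mathbb{C}}$ is irreducible. If $$\mathrm{Hess}(Q)=\det\Big[\frac{\partial^2 Q}{\partial x_i\partial x_j}\Big]_{i,j}=x^2y^2z^2$$ as polynomials (with $(x_1,x_2,x_3)=(x,y,z)$), then $Q(x,y,z)=Ax^4+By^4+Cz^4$ for some $A,B,C\in\mathbb{C}$ with $ABC=\frac{1}{1728}$.
   Context: $G_8\cong\mathbb{Z}_2^3$ acts on $\mathbb{C}[x,y,z]$ through the diagonal matrices $\mathrm{Diag}(a,b,c)$, $a,b,c\in\{-1,1\}$, by $f\mapsto f(ax,by,cz)$. Consequently every $G_8$-invariant quartic form has the shape $Ax^4+By^4+Cz^4+Dx^2y^2+Ex^2z^2+Fy^2z^2$ with $A,\dots,F\in\mathbb{C}$. *)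

theory Defs
  imports "HOL-Analysis.Analysis"
begin

text \<open>A ternary form (homogeneous polynomial) of degree n over the complex numbers,
  given by its coefficients: c i j is the coefficient of x^i y^j z^(n-i-j).\<close>
definition form3 :: "nat \<Rightarrow> (nat \<Rightarrow> nat \<Rightarrow> complex) \<Rightarrow> complex \<Rightarrow> complex \<Rightarrow> complex \<Rightarrow> complex" where
  "form3 n c x y z = (\<Sum>i\<le>n. \<Sum>j\<le>n - i. c i j * x ^ i * y ^ j * z ^ (n - i - j))"

text \<open>Irreducibility of a nonzero form of degree n: it is not a product of two forms of
  positive degrees (any factorisation of a form has homogeneous factors).
  Equality of polynomials over the infinite field C is equality as functions.\<close>
definition irreducible_form3 :: "nat \<Rightarrow> (nat \<Rightarrow> nat \<Rightarrow> complex) \<Rightarrow> bool" where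
  "irreducible_form3 n c \<longleftrightarrow>
     (\<exists>x y z. form3 n c x y z \<noteq> 0) \<and>
     \<not> (\<exists>d a b. 0 < d \<and> d < n \<and>
           (\<forall>x y z. form3 n c x y z = form3 d a x y z * form3 (n - d) b x y z))"

definition pd3 :: "nat \<Rightarrow> (complex \<Rightarrow> complex \<Rightarrow> complex \<Rightarrow> complex) \<Rightarrow> complex \<Rightarrow> complex \<Rightarrow> complex \<Rightarrow> complex" where
  "pd3 i f x y z =
     (if i = 0 then deriv (\<lambda>t. f t y z) x
      else if i = 1 then deriv (\<lambda>t. f x t z) y
      else deriv (\<lambda>t. f x y t) z)"

definition det3 :: "(nat \<Rightarrow> nat \<Rightarrow> complex) \<Rightarrow> complex" where
  "det3 M = M 0 0 * (M 1 1 * M 2 2 - M 1 2 * M 2 1)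
          - M 0 1 * (M 1 0 * M 2 2 - M 1 2 * M 2 0)
          + M 0 2 * (M 1 0 * M 2 1 - M 1 1 * M 2 0)"

definition hess3 :: "(complex \<Rightarrow> complex \<Rightarrow> complex \<Rightarrow> complex) \<Rightarrow> complex \<Rightarrow> complex \<Rightarrow> complex \<Rightarrow> complex" where
  "hess3 f x y z = det3 (\<lambda>i j. pd3 i (pd3 j f) x y z)"

end

theory Submission
  imports Defs
begin

text \<open>A \<open>G\<^sub>8\<close>-invariant quartic is diagonal,
  \<open>Q = A x\<^sup>4 + B y\<^sup>4 + C z\<^sup>4 + D x\<^sup>2y\<^sup>2 + E x\<^sup>2z\<^sup>2 + F y\<^sup>2z\<^sup>2\<close>, and its Hessian is a cubic form in
  \<open>X = x\<^sup>2, Y = y\<^sup>2, Z = z\<^sup>2\<close>. Since every complex number is a square, \<open>Hess(Q) = x\<^sup>2y\<^sup>2z\<^sup>2\<close>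
  says that this cubic equals \<open>XYZ\<close>, and comparing coefficients shows that at most one of
  \<open>D, E, F\<close> is nonzero. If one is, \<open>Q\<close> is a binomial such as \<open>C z\<^sup>4 + D x\<^sup>2y\<^sup>2\<close>, which over \<open>\<complex>\<close>
  factors as a difference of squares, contradicting irreducibility. So \<open>D = E = F = 0\<close>, and the
  \<open>XYZ\<close> coefficient reads \<open>1728 ABC = 1\<close>.\<close>

lemma form3_add:
  "form3 n (\<lambda>i j. a i j + b i j) x y z = form3 n a x y z + form3 n b x y z"
  by (simp add: form3_def algebra_simps sum.distrib)

lemma form3_diff:
  "form3 n (\<lambda>i j. a i j - b i j) x y z = form3 n a x y z - form3 n b x y z"
  by (simp add: form3_def algebra_simps sum_subtractf)

lemma form3_monomial:
  assumes "i0 + j0 \<le> n"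
  shows "form3 n (\<lambda>i j. if i = i0 \<and> j = j0 then s else 0) x y z
           = s * x ^ i0 * y ^ j0 * z ^ (n - i0 - j0)"
proof -
  have "{..n - i0} \<inter> {j0} = {j0}"
    using assms by auto
  then have "(\<Sum>j\<le>n - i. (if i = i0 \<and> j = j0 then s else 0) * x ^ i * y ^ j * z ^ (n - i - j))
          = (if i = i0 then s * x ^ i0 * y ^ j0 * z ^ (n - i0 - j0) else 0)" for i
    by (cases "i = i0") (simp_all add: if_distrib if_distribR sum.If_cases)
  then show ?thesis
    using assms by (simp add: form3_def)
qed

text \<open>Over \<open>\<complex>\<close> every binomial \<open>C m\<^sub>0\<^sup>2 + D m\<^sub>1\<^sup>2\<close> is a difference of squares
  \<open>(s m\<^sub>0 + t m\<^sub>1)(s m\<^sub>0 - t m\<^sub>1)\<close> with \<open>s\<^sup>2 = C\<close>, \<open>t\<^sup>2 = -D\<close>.\<close>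
lemma quartic_binomial_not_irreducible:
  assumes "i0 + j0 \<le> 2" and "i1 + j1 \<le> 2"
    and q: "\<forall>x y z. form3 4 q x y z = C * (x ^ i0 * y ^ j0 * z ^ (2 - i0 - j0))\<^sup>2
                                     + D * (x ^ i1 * y ^ j1 * z ^ (2 - i1 - j1))\<^sup>2"
  shows "\<not> irreducible_form3 4 q"
proof -
  define s t where "s = csqrt C" and "t = csqrt (- D)"
  define u where "u = (\<lambda>i j. if i = i0 \<and> j = j0 then s else 0)"
  define v where "v = (\<lambda>i j. if i = i1 \<and> j = j1 then t else 0)"
  have "form3 4 q x y z
          = form3 2 (\<lambda>i j. u i j + v i j) x y z * form3 (4 - 2) (\<lambda>i j. u i j - v i j) x y z"
    for x y z
  proof -
    define m0 m1 where "m0 = x ^ i0 * y ^ j0 * z ^ (2 - i0 - j0)"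
      and "m1 = x ^ i1 * y ^ j1 * z ^ (2 - i1 - j1)"
    have "form3 4 q x y z = C * m0\<^sup>2 + D * m1\<^sup>2"
      using q unfolding m0_def m1_def by blast
    also have "\<dots> = (s * m0 + t * m1) * (s * m0 - t * m1)"
      by (simp add: s_def t_def algebra_simps power_mult_distrib flip: power2_eq_square)
    also have "\<dots> = form3 2 (\<lambda>i j. u i j + v i j) x y z * form3 (4 - 2) (\<lambda>i j. u i j - v i j) x y z"
      using assms(1,2)
      by (simp add: form3_add form3_diff u_def v_def m0_def m1_def form3_monomial mult.assoc)
    finally show ?thesis .
  qed
  then show ?thesis
    unfolding irreducible_form3_def by (intro notI, elim conjE notE) (rule exI[of _ 2], auto)
qed

definition diag_quartic ::
  "complex \<Rightarrow> complex \<Rightarrow> complex \<Rightarrow> complex \<Rightarrow> complex \<Rightarrow> complex \<Rightarrow> complex \<Rightarrow> complex \<Rightarrow> complex \<Rightarrow> complex"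
  where "diag_quartic A B C D E F x y z =
           A * x ^ 4 + B * y ^ 4 + C * z ^ 4 + D * x\<^sup>2 * y\<^sup>2 + E * x\<^sup>2 * z\<^sup>2 + F * y\<^sup>2 * z\<^sup>2"

lemma form3_4_expand:
  "form3 4 q x y z =
     q 0 0 * z ^ 4 + q 0 1 * y * z ^ 3 + q 0 2 * y\<^sup>2 * z\<^sup>2 + q 0 3 * y ^ 3 * z + q 0 4 * y ^ 4
   + q 1 0 * x * z ^ 3 + q 1 1 * x * y * z\<^sup>2 + q 1 2 * x * y\<^sup>2 * z + q 1 3 * x * y ^ 3
   + q 2 0 * x\<^sup>2 * z\<^sup>2 + q 2 1 * x\<^sup>2 * y * z + q 2 2 * x\<^sup>2 * y\<^sup>2
   + q 3 0 * x ^ 3 * z + q 3 1 * x ^ 3 * y + q 4 0 * x ^ 4"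
  by (simp add: form3_def eval_nat_numeral algebra_simps)

text \<open>Averaging over the eight sign changes kills every monomial with an odd exponent.\<close>
lemma form3_4_sign_invariant_eq_diag_quartic:
  assumes "\<forall>a\<in>{-1,1}. \<forall>b\<in>{-1,1}. \<forall>c\<in>{-1,1}. \<forall>x y z.
             form3 4 q (a * x) (b * y) (c * z) = form3 4 q x y z"
  shows "form3 4 q = diag_quartic (q 4 0) (q 0 4) (q 0 0) (q 2 2) (q 2 0) (q 0 2)"
proof (intro ext)
  fix x y z
  let ?f = "form3 4 q"
  have "8 * ?f x y z = ?f x y z + ?f (-x) y z + ?f x (-y) z + ?f x y (-z)
          + ?f (-x) (-y) z + ?f (-x) y (-z) + ?f x (-y) (-z) + ?f (-x) (-y) (-z)"
    using assms by (simp add: ball_simps)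
  also have "\<dots> = 8 * diag_quartic (q 4 0) (q 0 4) (q 0 0) (q 2 2) (q 2 0) (q 0 2) x y z"
    unfolding form3_4_expand diag_quartic_def by (simp add: algebra_simps)
  finally show "?f x y z = diag_quartic (q 4 0) (q 0 4) (q 0 0) (q 2 2) (q 2 0) (q 0 2) x y z"
    by simp
qed

definition diag_hessian_cubic ::
  "complex \<Rightarrow> complex \<Rightarrow> complex \<Rightarrow> complex \<Rightarrow> complex \<Rightarrow> complex \<Rightarrow> complex \<Rightarrow> complex \<Rightarrow> complex \<Rightarrow> complex"
  where "diag_hessian_cubic a b c d e f X Y Z =
      a * d * e * X ^ 3 + b * d * f * Y ^ 3 + c * e * f * Z ^ 3
    + (a * d * f + a * b * e - 3 * d\<^sup>2 * e) * X\<^sup>2 * Y + (a * b * f + b * d * e - 3 * d\<^sup>2 * f) * X * Y\<^sup>2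
    + (a * c * d + a * e * f - 3 * d * e\<^sup>2) * X\<^sup>2 * Z + (a * c * f + c * d * e - 3 * e\<^sup>2 * f) * X * Z\<^sup>2
    + (b * c * d + b * e * f - 3 * d * f\<^sup>2) * Y\<^sup>2 * Z + (c * d * f + b * c * e - 3 * e * f\<^sup>2) * Y * Z\<^sup>2
    + (a * b * c - 3 * a * f\<^sup>2 - 3 * b * e\<^sup>2 - 3 * c * d\<^sup>2 + 18 * d * e * f) * X * Y * Z"

lemma hess3_diag_quartic:
  "hess3 (diag_quartic A B C D E F) x y z =
     diag_hessian_cubic (12 * A) (12 * B) (12 * C) (2 * D) (2 * E) (2 * F) (x\<^sup>2) (y\<^sup>2) (z\<^sup>2)"
proof -
  let ?Q = "diag_quartic A B C D E F"
  have grad: "pd3 0 ?Q = (\<lambda>x y z. 4 * A * x ^ 3 + 2 * D * x * y\<^sup>2 + 2 * E * x * z\<^sup>2)"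
    "pd3 1 ?Q = (\<lambda>x y z. 4 * B * y ^ 3 + 2 * D * x\<^sup>2 * y + 2 * F * y * z\<^sup>2)"
    "pd3 2 ?Q = (\<lambda>x y z. 4 * C * z ^ 3 + 2 * E * x\<^sup>2 * z + 2 * F * y\<^sup>2 * z)"
    unfolding pd3_def diag_quartic_def
    by (intro ext; simp; rule DERIV_imp_deriv; (rule derivative_eq_intros refl)+; simp add: algebra_simps)+
  have "pd3 0 (pd3 0 ?Q) x y z = 12 * A * x\<^sup>2 + 2 * D * y\<^sup>2 + 2 * E * z\<^sup>2"
    "pd3 1 (pd3 1 ?Q) x y z = 12 * B * y\<^sup>2 + 2 * D * x\<^sup>2 + 2 * F * z\<^sup>2"
    "pd3 2 (pd3 2 ?Q) x y z = 12 * C * z\<^sup>2 + 2 * E * x\<^sup>2 + 2 * F * y\<^sup>2"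
    "pd3 0 (pd3 1 ?Q) x y z = 4 * D * x * y" "pd3 1 (pd3 0 ?Q) x y z = 4 * D * x * y"
    "pd3 0 (pd3 2 ?Q) x y z = 4 * E * x * z" "pd3 2 (pd3 0 ?Q) x y z = 4 * E * x * z"
    "pd3 1 (pd3 2 ?Q) x y z = 4 * F * y * z" "pd3 2 (pd3 1 ?Q) x y z = 4 * F * y * z"
    unfolding grad
    by (simp add: pd3_def; rule DERIV_imp_deriv; (rule derivative_eq_intros refl)+; simp add: algebra_simps)+
  then show ?thesis
    unfolding hess3_def det3_def diag_hessian_cubic_def
    by (simp add: algebra_simps power2_eq_square power3_eq_cube)
qed

lemma binary_cubic_eq_0_imp_coeffs_eq_0:
  fixes p r s t :: "'a::field_char_0"
  assumes "\<forall>X Y. p * X ^ 3 + r * X\<^sup>2 * Y + s * X * Y\<^sup>2 + t * Y ^ 3 = 0"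
  shows "p = 0 \<and> r = 0 \<and> s = 0 \<and> t = 0"
proof -
  have p: "p = 0" and t: "t = 0"
    using assms[rule_format, of 1 0] assms[rule_format, of 0 1] by simp_all
  have "r + s = 0" and "4 * r + 2 * s = 0"
    using assms[rule_format, of 1 1] assms[rule_format, of 2 1] p t by (simp_all add: algebra_simps)
  moreover have "2 * r = (4 * r + 2 * s) - 2 * (r + s)"
    by (simp add: algebra_simps)
  ultimately have "r = 0" "s = 0"
    by (simp_all add: add_eq_0_iff2)
  with p t show ?thesis
    by simp
qed

lemma diag_hessian_cubic_eq_XYZ_coeffs:
  assumes H: "\<forall>X Y Z. diag_hessian_cubic a b c d e f X Y Z = X * Y * Z"
  shows "a * d * e = 0" "b * d * f = 0" "c * e * f = 0"
    and "a * d * f + a * b * e - 3 * d\<^sup>2 * e = 0" "a * b * f + b * d * e - 3 * d\<^sup>2 * f = 0"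
    and "a * c * d + a * e * f - 3 * d * e\<^sup>2 = 0" "a * c * f + c * d * e - 3 * e\<^sup>2 * f = 0"
    and "b * c * d + b * e * f - 3 * d * f\<^sup>2 = 0" "c * d * f + b * c * e - 3 * e * f\<^sup>2 = 0"
    and "a * b * c - 3 * a * f\<^sup>2 - 3 * b * e\<^sup>2 - 3 * c * d\<^sup>2 + 18 * d * e * f = 1"
proof -
  have XY: "a * d * e = 0 \<and> a * d * f + a * b * e - 3 * d\<^sup>2 * e = 0
              \<and> a * b * f + b * d * e - 3 * d\<^sup>2 * f = 0 \<and> b * d * f = 0"
    by (rule binary_cubic_eq_0_imp_coeffs_eq_0)
      (use H[rule_format, of _ _ 0] in \<open>simp add: diag_hessian_cubic_def ac_simps\<close>)
  have XZ: "a * d * e = 0 \<and> a * c * d + a * e * f - 3 * d * e\<^sup>2 = 0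
              \<and> a * c * f + c * d * e - 3 * e\<^sup>2 * f = 0 \<and> c * e * f = 0"
    by (rule binary_cubic_eq_0_imp_coeffs_eq_0)
      (use H[rule_format, of _ 0] in \<open>simp add: diag_hessian_cubic_def ac_simps\<close>)
  have YZ: "b * d * f = 0 \<and> b * c * d + b * e * f - 3 * d * f\<^sup>2 = 0
              \<and> c * d * f + b * c * e - 3 * e * f\<^sup>2 = 0 \<and> c * e * f = 0"
    by (rule binary_cubic_eq_0_imp_coeffs_eq_0)
      (use H[rule_format, of 0] in \<open>simp add: diag_hessian_cubic_def ac_simps\<close>)
  from XY XZ YZ show "a * d * e = 0" "b * d * f = 0" "c * e * f = 0"
    and "a * d * f + a * b * e - 3 * d\<^sup>2 * e = 0" "a * b * f + b * d * e - 3 * d\<^sup>2 * f = 0"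
    and "a * c * d + a * e * f - 3 * d * e\<^sup>2 = 0" "a * c * f + c * d * e - 3 * e\<^sup>2 * f = 0"
    and "b * c * d + b * e * f - 3 * d * f\<^sup>2 = 0" "c * d * f + b * c * e - 3 * e * f\<^sup>2 = 0"
    by simp_all
  with H[rule_format, of 1 1 1]
  show "a * b * c - 3 * a * f\<^sup>2 - 3 * b * e\<^sup>2 - 3 * c * d\<^sup>2 + 18 * d * e * f = 1"
    by (simp add: diag_hessian_cubic_def)
qed

text \<open>Two nonzero mixed coefficients, say \<open>d\<close> and \<open>e\<close>, are impossible: \<open>a d e = 0\<close> forces
  \<open>a = 0\<close>, and then the \<open>X\<^sup>2 Y\<close> coefficient is \<open>-3 d\<^sup>2 e\<close>. With only \<open>d \<noteq> 0\<close>, the \<open>X Y Z\<close>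
  coefficient gives \<open>c \<noteq> 0\<close>, and the \<open>X\<^sup>2 Z\<close>, \<open>Y\<^sup>2 Z\<close> coefficients give \<open>a = b = 0\<close>.\<close>
lemma diag_hessian_cubic_eq_XYZ_cases:
  assumes "\<forall>X Y Z. diag_hessian_cubic a b c d e f X Y Z = X * Y * Z"
  shows "d = 0 \<and> e = 0 \<and> f = 0 \<and> a * b * c = 1
       \<or> a = 0 \<and> b = 0 \<and> e = 0 \<and> f = 0
       \<or> a = 0 \<and> c = 0 \<and> d = 0 \<and> f = 0
       \<or> b = 0 \<and> c = 0 \<and> d = 0 \<and> e = 0"
proof -
  note coeffs = diag_hessian_cubic_eq_XYZ_coeffs[OF assms]
  have de: "d = 0 \<or> e = 0" and df: "d = 0 \<or> f = 0" and ef: "e = 0 \<or> f = 0"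
    using coeffs(1-5,7) by auto
  show ?thesis
  proof (cases "d = 0 \<and> e = 0 \<and> f = 0")
    case True
    with coeffs(10) show ?thesis
      by simp
  next
    case False
    with de df ef consider "d \<noteq> 0" "e = 0" "f = 0" | "e \<noteq> 0" "d = 0" "f = 0"
      | "f \<noteq> 0" "d = 0" "e = 0"
      by blast
    then show ?thesis
    proof cases
      case 1
      with coeffs(10) have "c \<noteq> 0" by auto
      with 1 coeffs(6,8) show ?thesis by auto
    next
      case 2
      with coeffs(10) have "b \<noteq> 0" by auto
      with 2 coeffs(4,9) show ?thesis by auto
    next
      case 3
      with coeffs(10) have "a \<noteq> 0" by auto
      with 3 coeffs(5,7) show ?thesis by auto
    qed
  qed
qed

theorem theorem2p3:
  fixes q :: "nat \<Rightarrow> nat \<Rightarrow> complex"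
  assumes G8_inv: "\<forall>a\<in>{-1,1}. \<forall>b\<in>{-1,1}. \<forall>c\<in>{-1,1}. \<forall>x y z.
                     form3 4 q (a * x) (b * y) (c * z) = form3 4 q x y z"
    and irred: "irreducible_form3 4 q"
    and hess: "\<forall>x y z. hess3 (form3 4 q) x y z = x\<^sup>2 * y\<^sup>2 * z\<^sup>2"
  shows "\<exists>A B C. (\<forall>x y z. form3 4 q x y z = A * x ^ 4 + B * y ^ 4 + C * z ^ 4)
                 \<and> A * B * C = 1 / 1728"
proof -
  obtain A B C D E F where Q: "form3 4 q = diag_quartic A B C D E F"
    using form3_4_sign_invariant_eq_diag_quartic[OF G8_inv] by blast
  have "\<forall>X Y Z. diag_hessian_cubic (12 * A) (12 * B) (12 * C) (2 * D) (2 * E) (2 * F) X Y Z = X * Y * Z"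
  proof (intro allI)
    fix X Y Z
    show "diag_hessian_cubic (12 * A) (12 * B) (12 * C) (2 * D) (2 * E) (2 * F) X Y Z = X * Y * Z"
      using hess[rule_format, of "csqrt X" "csqrt Y" "csqrt Z"] by (simp add: Q hess3_diag_quartic)
  qed
  from diag_hessian_cubic_eq_XYZ_cases[OF this]
  have "D = 0 \<and> E = 0 \<and> F = 0 \<and> A * B * C = 1 / 1728
      \<or> A = 0 \<and> B = 0 \<and> E = 0 \<and> F = 0
      \<or> A = 0 \<and> C = 0 \<and> D = 0 \<and> F = 0
      \<or> B = 0 \<and> C = 0 \<and> D = 0 \<and> E = 0"
    by (simp add: ac_simps)
  moreover have "\<not> (A = 0 \<and> B = 0 \<and> E = 0 \<and> F = 0)"
    using irred quartic_binomial_not_irreducible[of 0 0 1 1 q C D]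
    by (auto simp: Q diag_quartic_def power_mult_distrib)
  moreover have "\<not> (A = 0 \<and> C = 0 \<and> D = 0 \<and> F = 0)"
    using irred quartic_binomial_not_irreducible[of 0 2 1 0 q B E]
    by (auto simp: Q diag_quartic_def power_mult_distrib)
  moreover have "\<not> (B = 0 \<and> C = 0 \<and> D = 0 \<and> E = 0)"
    using irred quartic_binomial_not_irreducible[of 2 0 0 1 q A F]
    by (auto simp: Q diag_quartic_def power_mult_distrib)
  ultimately have "D = 0" "E = 0" "F = 0" "A * B * C = 1 / 1728"
    by blast+
  then show ?thesis
    by (intro exI[of _ A] exI[of _ B] exI[of _ C]) (simp add: Q diag_quartic_def)
qed

end
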